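(* Let $E$ be a Banach space with $E = V \oplus W$ ($V, W$ linear subspaces), and let $\Phi\colon E \to \mathbb{R}$ be locally Lipschitz. For $w \in W$ set $\varphi(w) = \sup_{g \in V} \Phi(g+w)$ and $$V(w) = \{ v \in V : \Phi(v+w) = \max_{g \in V} \Phi(g+w) \}.$$ Assume: (a) for every $w \in W$, $V(w) \neq \varnothing$ (so $\varphi(w)=\Phi(v+w)$ for $v\in V(w)$); (b) the functional $\varphi\colon W \to \mathbb{R}$ is bounded below and attains its minimum at some point $\overline{w} \in W$; (c) there exists a continuous map $s\colon W \to V$ with $s(w) \in V(w)$ for all $w \in W$. Then $\overline{u} = s(\overline{w}) + \overline{w}$ is a critical point of $\Phi$, i.e. $0 \in \partial \Phi(\overline{u})$, and $$\Phi(\overline{u}) = \min_{w \in W} \max_{v \in V} \Phi(v+w).$$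
   Context: For a locally Lipschitz $\Phi\colon E\to\mathbb{R}$, the generalized directional derivative is $\Phi^\circ(x;v) = \limsup_{y \to x,\, t \downarrow 0} \frac{\Phi(y+tv) - \Phi(y)}{t}$, and the Clarke subdifferential is $\partial\Phi(x) = \{x^* \in E^* : \Phi^\circ(x;v) \ge \langle x^*, v\rangle \text{ for all } v \in E\}$. A point $x$ is a critical point of $\Phi$ if $0 \in \partial\Phi(x)$. *)

theory Defs
  imports "HOL-Analysis.Analysis"
begin

definition locally_lipschitz :: "('a::metric_space \<Rightarrow> real) \<Rightarrow> bool" where
  "locally_lipschitz \<Phi> \<longleftrightarrow> (\<forall>x. \<exists>r>0. \<exists>L. L-lipschitz_on (ball x r) \<Phi>)"

definition clarke_dd :: "('a::real_normed_vector \<Rightarrow> real) \<Rightarrow> 'a \<Rightarrow> 'a \<Rightarrow> ereal" where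
  "clarke_dd \<Phi> x v =
     Limsup (nhds x \<times>\<^sub>F at_right (0::real))
            (\<lambda>(y, t). ereal ((\<Phi> (y + t *\<^sub>R v) - \<Phi> y) / t))"

definition clarke_subdiff :: "('a::real_normed_vector \<Rightarrow> real) \<Rightarrow> 'a \<Rightarrow> ('a \<Rightarrow> real) set" where
  "clarke_subdiff \<Phi> x =
     {xs. bounded_linear xs \<and> (\<forall>v. clarke_dd \<Phi> x v \<ge> ereal (xs v))}"

definition max_set :: "('a::real_vector \<Rightarrow> real) \<Rightarrow> 'a set \<Rightarrow> 'a \<Rightarrow> 'a set" where
  "max_set \<Phi> V w = {v \<in> V. \<forall>g\<in>V. \<Phi> (g + w) \<le> \<Phi> (v + w)}"

end

(* Write v = a + b with a in V, b in W, and follow the curve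
   y(t) = s(wbar + t b) + wbar - t a, which tends to u = s(wbar) + wbar as t decreases to 0
   because s is continuous. Since y(t) - wbar lies in V, maximality of s(wbar) gives
   Phi(y(t)) <= Phi(u); since y(t) + t v = s(wbar + t b) + (wbar + t b), minimality of wbar
   gives Phi(u) <= Phi(y(t) + t v). So the difference quotients along the curve are
   nonnegative, and the Clarke derivative of Phi at u is nonnegative in every direction. *)

theory Submission
  imports Defs
begin

lemma Limsup_compose_filterlim_le:
  assumes "filterlim g F G"
  shows "Limsup G (\<lambda>x. f (g x)) \<le> Limsup F f"
proof -
  have "Limsup G (\<lambda>x. f (g x)) \<le> Limsup (filtermap g G) f"
    by (rule Limsup_filtermap_ge)
  also have "\<dots> \<le> Limsup F f"
    unfolding Limsup_def
    using assms by (intro INF_superset_mono) (auto simp: filterlim_def le_filter_def)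
  finally show ?thesis .
qed

lemma zero_in_clarke_subdiff_iff:
  "(\<lambda>_. 0) \<in> clarke_subdiff \<Phi> x \<longleftrightarrow> (\<forall>v. 0 \<le> clarke_dd \<Phi> x v)"
  unfolding clarke_subdiff_def by (auto simp: bounded_linear_zero zero_ereal_def)

lemma clarke_dd_nonneg_along_curve:
  fixes \<Phi> :: "'a::real_normed_vector \<Rightarrow> real"
  assumes "(y \<longlongrightarrow> x) (at_right 0)"
    and "\<forall>\<^sub>F t in at_right 0. \<Phi> (y t) \<le> \<Phi> (y t + t *\<^sub>R v)"
  shows "0 \<le> clarke_dd \<Phi> x v"
proof -
  define q where "q = (\<lambda>(z, t). ereal ((\<Phi> (z + t *\<^sub>R v) - \<Phi> z) / t))"
  have "\<forall>\<^sub>F t in at_right 0. 0 \<le> q (y t, t)"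
    using assms(2) eventually_at_right_less[of 0]
    by eventually_elim (simp add: q_def)
  then have "0 \<le> Limsup (at_right 0) (\<lambda>t. q (y t, t))"
    by (intro le_Limsup) simp_all
  also have "\<dots> \<le> Limsup (nhds x \<times>\<^sub>F at_right 0) q"
    using assms(1) by (intro Limsup_compose_filterlim_le filterlim_Pair filterlim_ident)
  finally show ?thesis
    unfolding clarke_dd_def q_def .
qed

lemma SUP_eq_max_set:
  fixes \<Phi> :: "'a::real_vector \<Rightarrow> real"
  assumes "v \<in> max_set \<Phi> V w"
  shows "(SUP g\<in>V. \<Phi> (g + w)) = \<Phi> (v + w)"
  using assms unfolding max_set_def
  by (intro cSup_eq_maximum) auto

lemma clarke_dd_nonneg_at_minimax_point:
  fixes \<Phi> :: "'a::real_normed_vector \<Rightarrow> real"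
  assumes V: "subspace V" and W: "subspace W" and VW: "V + W = UNIV"
    and s_cont: "continuous_on W s" and s_max: "\<forall>w\<in>W. s w \<in> max_set \<Phi> V w"
    and wbar: "wbar \<in> W" and wbar_min: "\<forall>w\<in>W. \<Phi> (s wbar + wbar) \<le> \<Phi> (s w + w)"
  shows "0 \<le> clarke_dd \<Phi> (s wbar + wbar) v"
proof -
  obtain a b where ab: "a \<in> V" "b \<in> W" "v = a + b"
    using VW by (metis UNIV_I set_plus_elim)
  define w where "w t = wbar + t *\<^sub>R b" for t :: real
  define y where "y t = s (w t) + wbar - t *\<^sub>R a" for t :: real
  have w_in_W: "w t \<in> W" for t
    unfolding w_def using W wbar ab(2) by (simp add: subspace_add subspace_scale)
  have "(w \<longlongrightarrow> wbar) (at_right 0)"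
    unfolding w_def by (auto intro!: tendsto_eq_intros)
  from s_cont this wbar have "((\<lambda>t. s (w t)) \<longlongrightarrow> s wbar) (at_right 0)"
    by (rule continuous_on_tendsto_compose) (simp add: w_in_W)
  then have "(y \<longlongrightarrow> s wbar + wbar) (at_right 0)"
    unfolding y_def by (auto intro!: tendsto_eq_intros)
  moreover have "\<Phi> (y t) \<le> \<Phi> (y t + t *\<^sub>R v)" for t
  proof -
    have "s (w t) - t *\<^sub>R a \<in> V"
      using s_max w_in_W ab(1) V unfolding max_set_def by (simp add: subspace_diff subspace_scale)
    moreover have "y t = (s (w t) - t *\<^sub>R a) + wbar"
      unfolding y_def by simp
    ultimately have "\<Phi> (y t) \<le> \<Phi> (s wbar + wbar)"
      using s_max wbar unfolding max_set_def by simp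
    also have "\<dots> \<le> \<Phi> (s (w t) + w t)"
      using wbar_min w_in_W by blast
    also have "s (w t) + w t = y t + t *\<^sub>R v"
      unfolding y_def w_def ab(3) by (simp add: algebra_simps)
    finally show ?thesis .
  qed
  ultimately show ?thesis
    by (intro clarke_dd_nonneg_along_curve always_eventually) auto
qed

theorem theorem8:
  fixes \<Phi> :: "'a::banach \<Rightarrow> real"
    and V W :: "'a set"
    and s :: "'a \<Rightarrow> 'a"
    and wbar :: 'a
  assumes "subspace V" and "subspace W"
    and "V \<inter> W = {0}" and "V + W = UNIV"
    and "locally_lipschitz \<Phi>"
    and a: "\<forall>w\<in>W. max_set \<Phi> V w \<noteq> {}"
    and b_bdd: "bdd_below ((\<lambda>w. SUP g\<in>V. \<Phi> (g + w)) ` W)"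
    and b_min: "wbar \<in> W" "\<forall>w\<in>W. (SUP g\<in>V. \<Phi> (g + wbar)) \<le> (SUP g\<in>V. \<Phi> (g + w))"
    and c: "continuous_on W s" "\<forall>w\<in>W. s w \<in> V \<and> s w \<in> max_set \<Phi> V w"
  shows "(\<lambda>_. 0) \<in> clarke_subdiff \<Phi> (s wbar + wbar)
    \<and> \<Phi> (s wbar + wbar) = (INF w\<in>W. SUP v\<in>V. \<Phi> (v + w))"
proof
  have SUP_eq: "(SUP g\<in>V. \<Phi> (g + w)) = \<Phi> (s w + w)" if "w \<in> W" for w
    using SUP_eq_max_set c(2) that by blast
  have wbar_min: "\<forall>w\<in>W. \<Phi> (s wbar + wbar) \<le> \<Phi> (s w + w)"
    using b_min SUP_eq by simp
  have "\<forall>v. 0 \<le> clarke_dd \<Phi> (s wbar + wbar) v"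
    using clarke_dd_nonneg_at_minimax_point[OF assms(1,2,4) c(1) _ b_min(1) wbar_min] c(2)
    by blast
  then show "(\<lambda>_. 0) \<in> clarke_subdiff \<Phi> (s wbar + wbar)"
    by (simp add: zero_in_clarke_subdiff_iff)
  show "\<Phi> (s wbar + wbar) = (INF w\<in>W. SUP v\<in>V. \<Phi> (v + w))"
    using b_min(1) wbar_min SUP_eq by (intro cInf_eq_minimum[symmetric]) auto
qed

end
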